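(* Let $s,t,q,N$ be integers with $0\le s<q$, $1\le t<q$, $N\ge0$, $t\nmid q$ and $\gcd(t,q)=g>1$. Put $\tilde t=t/g$, $\tilde q=q/g$, and write $s=\overline sg+s_g$ ($0\le s_g<g$), $\overline s=\overline{\overline s}\tilde t+\hat{\hat s}$ ($0\le\hat{\hat s}<\tilde t$), $\tilde q=\overline{\overline q}\tilde t+\hat{\hat q}$ ($1\le\hat{\hat q}<\tilde t$). Let $S^-(s,t,q,N)=\sum_{k=0}^N\lfloor(s-kt)/q\rfloor$, $M=-\lfloor(s-Nt)/q\rfloor$, $x_M=(s+(M-1)q)/t$, $S=-\lfloor q/t\rfloor\frac{(M-1)M}2-M(N-\lfloor x_M\rfloor)$, $H=\{k\in\mathbb N:(\hat{\hat s}+k\hat{\hat q})\bmod\tilde t<\hat{\hat q}\}$, $J=H\cap\{0,\dots,\tilde t-1\}=\{j_0<\dots<j_{\hat{\hat q}-1}\}$, $S_K=\sum_{k\in K}k$. Then: (a) if $j_0\ge M$, $S^-(s,t,q,N)=S$; (b.1) if $j_0<M\le j_{\hat{\hat q}-1}$, $S^-(s,t,q,N)=S-S_K$ with $K=H\cap\{0,\dots,M-1\}$; (b.2) if $j_{\hat{\hat q}-1}<M$ and $j_0+\tilde t\ge M$, $S^-(s,t,q,N)=S-S_J$; (b.3) if $j_{\hat{\hat q}-1}<M$ and $j_0+\tilde t<M$, with $u=\lfloor(M-1)/\tilde t\rfloor$ and $K=H\cap\{u\tilde t,\dots,M-1\}$, $S^-(s,t,q,N)=S-uS_J-\hat{\hat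 q}\,\tilde t\frac{(u-1)u}2-S_K$.
   Context: Here $r\bmod\tilde t$ denotes the representative of $r$ in $\{0,\dots,\tilde t-1\}$. *)

theory Defs
  imports Main
begin

text \<open>S^-(s,t,q,N) = sum_{k=0}^N floor((s - k t)/q); for q > 0 the floor of the
  rational quotient equals integer division.\<close>
definition Sminus :: "int \<Rightarrow> int \<Rightarrow> int \<Rightarrow> int \<Rightarrow> int" where
  "Sminus s t q N = (\<Sum>k=0..N. (s - k*t) div q)"

end

(* Counting the lattice points (k, m) with 0 <= k <= N, m >= 1 and s + (m - 1) q < k t once by
   rows and once by columns turns S^-(s,t,q,N) into - sum_{m=1..M} (N - a m), where
   a m = floor ((s + (m - 1) q) / t). Consecutive values a m and a (m + 1) differ by floor (q / t)
   plus a carry, and after cancelling g = gcd t q the carry occurs exactly for m in H, so summation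
   by parts gives S^- = S - (sum of the elements of H below M). The set H is periodic with period
   t / g, and each period contains exactly qhh elements because k -> (shh + k qhh) mod (t / g)
   permutes the residues; splitting {0..M-1} into full periods and a remainder gives the cases. *)

theory Submission
  imports Defs
begin

lemma zdiv_less_iff:
  fixes x y q :: int
  assumes "0 < q"
  shows "x div q < y \<longleftrightarrow> x < y * q"
proof
  assume "x div q < y"
  then have "(x div q + 1) * q \<le> y * q"
    using assms by (intro mult_right_mono) simp_all
  moreover have "x < (x div q + 1) * q"
    using div_mult_mod_eq[of x q] pos_mod_bound[OF assms, of x]
    unfolding distrib_right mult_1_left by linarith
  ultimately show "x < y * q"
    by simp
next
  assume "x < y * q"
  moreover have "x div q * q \<le> x"
    using div_mult_mod_eq[of x q] pos_mod_sign[OF assms, of x] by linarith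
  ultimately have "x div q * q < y * q"
    by simp
  then show "x div q < y"
    using assms by simp
qed

lemma sum_card_filter_swap:
  assumes "finite A" "finite B"
  shows "(\<Sum>a\<in>A. card {b\<in>B. P a b}) = (\<Sum>b\<in>B. card {a\<in>A. P a b})"
proof -
  have "(\<Sum>a\<in>A. card {b\<in>B. P a b}) = (\<Sum>a\<in>A. \<Sum>b\<in>B. if P a b then 1 else 0)"
    using assms by (simp add: sum.inter_filter[symmetric])
  also have "\<dots> = (\<Sum>b\<in>B. \<Sum>a\<in>A. if P a b then 1 else 0)"
    by (rule sum.swap)
  also have "\<dots> = (\<Sum>b\<in>B. card {a\<in>A. P a b})"
    using assms by (simp add: sum.inter_filter[symmetric])
  finally show ?thesis .
qed

lemma neg_div_eq_card:
  fixes x q M :: int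
  assumes "0 < q" "x < q" "- (x div q) \<le> M"
  shows "- (x div q) = int (card {m\<in>{1..M}. x < (1 - m) * q})"
proof -
  have "x < (1 - m) * q \<longleftrightarrow> m \<le> - (x div q)" for m
    using zdiv_less_iff[OF assms(1), of x "1 - m"] by linarith
  then have "{m\<in>{1..M}. x < (1 - m) * q} = {m\<in>{1..M}. m \<le> - (x div q)}"
    by (simp only:)
  also have "\<dots> = {1..- (x div q)}"
    using assms(3) by auto
  finally have "{m\<in>{1..M}. x < (1 - m) * q} = {1..- (x div q)}" .
  moreover have "0 \<le> - (x div q)"
    using zdiv_less_iff[OF assms(1), of x 1] assms(2) by simp
  ultimately show ?thesis
    by simp
qed

lemma diff_div_eq_card:
  fixes x t N :: int
  assumes "0 < t" "0 \<le> x" "x < N * t"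
  shows "N - x div t = int (card {k\<in>{0..N}. x < k * t})"
proof -
  have "x < k * t \<longleftrightarrow> x div t + 1 \<le> k" for k
    using zdiv_less_iff[OF assms(1), of x k] by linarith
  then have "{k\<in>{0..N}. x < k * t} = {k\<in>{0..N}. x div t + 1 \<le> k}"
    by (simp only:)
  also have "\<dots> = {x div t + 1..N}"
    using pos_imp_zdiv_nonneg_iff[OF assms(1), of x] assms(2) by auto
  finally have "{k\<in>{0..N}. x < k * t} = {x div t + 1..N}" .
  moreover have "x div t < N"
    using zdiv_less_iff[OF assms(1), of x N] assms(3) by simp
  ultimately show ?thesis
    by simp
qed

lemma Sminus_dual_sum:
  fixes s t q N :: int
  assumes "0 \<le> s" "s < q" "0 < t" "0 \<le> N"
  defines "M \<equiv> - ((s - N*t) div q)"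
  shows "Sminus s t q N = - (\<Sum>m=1..M. N - (s + (m - 1)*q) div t)"
proof -
  define P where "P k m \<longleftrightarrow> s - k*t < (1 - m) * q" for k m :: int
  have "0 < q"
    using assms by simp
  have row: "(s - k*t) div q = - int (card {m\<in>{1..M}. P k m})" if "k \<in> {0..N}" for k
  proof -
    have "0 \<le> k*t" "k*t \<le> N*t"
      using that \<open>0 < t\<close> by (simp_all add: mult_right_mono)
    then have "- ((s - k*t) div q) \<le> M"
      unfolding M_def using zdiv_mono1[OF _ \<open>0 < q\<close>, of "s - N*t" "s - k*t"] by simp
    moreover have "s - k*t < q"
      using \<open>0 \<le> k*t\<close> \<open>s < q\<close> by simp
    ultimately show ?thesis
      using neg_div_eq_card[OF \<open>0 < q\<close>, of "s - k*t" M] unfolding P_def by simp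
  qed
  have column: "N - (s + (m - 1)*q) div t = int (card {k\<in>{0..N}. P k m})" if "m \<in> {1..M}" for m
  proof -
    have "(s - N*t) div q < 1 - m"
      using that unfolding M_def by simp
    then have "s + (m - 1)*q < N * t"
      using zdiv_less_iff[OF \<open>0 < q\<close>, of "s - N*t" "1 - m"] by (simp add: algebra_simps)
    moreover have "0 \<le> s + (m - 1)*q"
      using that \<open>0 \<le> s\<close> \<open>0 < q\<close> by simp
    moreover have "{k\<in>{0..N}. P k m} = {k\<in>{0..N}. s + (m - 1)*q < k * t}"
      unfolding P_def by (simp add: algebra_simps)
    ultimately show ?thesis
      using diff_div_eq_card[OF \<open>0 < t\<close>, of "s + (m - 1)*q" N] by simp
  qed
  have swap: "(\<Sum>k=0..N. card {m\<in>{1..M}. P k m}) = (\<Sum>m=1..M. card {k\<in>{0..N}. P k m})"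
    by (rule sum_card_filter_swap) simp_all
  have "Sminus s t q N = (\<Sum>k=0..N. - int (card {m\<in>{1..M}. P k m}))"
    unfolding Sminus_def using row by (intro sum.cong) auto
  also have "\<dots> = - int (\<Sum>m=1..M. card {k\<in>{0..N}. P k m})"
    unfolding swap[symmetric] by (simp add: sum_negf)
  also have "\<dots> = - (\<Sum>m=1..M. N - (s + (m - 1)*q) div t)"
    using column by (simp add: sum_negf)
  finally show ?thesis .
qed

lemma div_add_carry:
  fixes x y n :: int
  assumes "0 < n"
  shows "(x + y) div n = x div n + y div n + (if (x + y) mod n < y mod n then 1 else 0)"
proof -
  define a b where "a = x mod n" and "b = y mod n"
  have bounds: "0 \<le> a" "a < n" "0 \<le> b" "b < n"
    unfolding a_def b_def using assms by simp_all
  have "(x + y) mod n = (a + b) mod n"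
    unfolding a_def b_def by (simp add: mod_add_eq)
  moreover have "(a + b) div n = (if (a + b) mod n < b then 1 else 0)"
  proof (cases "a + b < n")
    case True
    then show ?thesis
      using bounds by simp
  next
    case False
    then have "(a + b) div n = 1"
      using bounds div_pos_geq[OF assms, of "a + b"] by simp
    moreover have "(a + b) mod n = a + b - (a + b) div n * n"
      by (metis minus_div_mult_eq_mod)
    ultimately show ?thesis
      using bounds by simp
  qed
  ultimately show ?thesis
    unfolding div_add1_eq[of x y n] a_def b_def by simp
qed

definition carry_set :: "int \<Rightarrow> int \<Rightarrow> int \<Rightarrow> int set" where
  "carry_set r d n = {k. 0 \<le> k \<and> (r + k*d) mod n < d}"

lemma div_step_carry:
  fixes s q t m :: int
  assumes "0 < t" "0 \<le> m"
  shows "(s + m*q) div t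
    = (s + (m - 1)*q) div t + q div t + (if m \<in> carry_set s (q mod t) t then 1 else 0)"
proof -
  have "(s + m*q) mod t = (s + m*(q mod t)) mod t"
    by (metis mod_add_right_eq mod_mult_right_eq)
  then show ?thesis
    using div_add_carry[OF \<open>0 < t\<close>, of "s + (m - 1)*q" q] assms
    by (simp add: carry_set_def algebra_simps)
qed

lemma sum_diff_last_by_parts:
  fixes a :: "int \<Rightarrow> 'a::comm_ring_1" and n :: int
  assumes "0 \<le> n"
  shows "(\<Sum>m=1..n. a n - a m) = (\<Sum>m=1..n-1. of_int m * (a (m + 1) - a m))"
  using assms
proof (induction n rule: int_ge_induct)
  case base
  show ?case by simp
next
  case (step n)
  have top: "{1..n+1} = insert (n + 1) {1..n}"
    using step.hyps by auto
  have "(\<Sum>m=1..n+1. a (n + 1) - a m) = (\<Sum>m=1..n. a (n + 1) - a m)"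
    unfolding top by simp
  also have "\<dots> = (\<Sum>m=1..n. (a n - a m) + (a (n + 1) - a n))"
    by simp
  also have "\<dots> = (\<Sum>m=1..n. a n - a m) + of_int n * (a (n + 1) - a n)"
    unfolding sum.distrib sum_constant using step.hyps by simp
  also have "\<dots> = (\<Sum>m=1..n-1. of_int m * (a (m + 1) - a m)) + of_int n * (a (n + 1) - a n)"
    using step.IH by simp
  also have "\<dots> = (\<Sum>m=1..n. of_int m * (a (m + 1) - a m))"
  proof (cases "n = 0")
    case False
    then have "{1..n} = insert n {1..n-1}"
      using step.hyps by auto
    then show ?thesis by (simp add: add.commute)
  qed simp
  finally show ?case by simp
qed

lemma sum_Icc_one_int:
  fixes n :: int
  assumes "0 \<le> n"
  shows "\<Sum>{1..n - 1} = ((n - 1) * n) div 2"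
proof (cases "n \<le> 1")
  case True
  then have "n = 0 \<or> n = 1"
    using assms by auto
  then show ?thesis by auto
next
  case False
  then show ?thesis
    using Sum_Icc_int[of 1 "n - 1"] by simp
qed

lemma sum_diff_last_increments:
  fixes a :: "int \<Rightarrow> int" and c n :: int and H :: "int set"
  assumes "0 \<le> n"
    and "\<And>m. 1 \<le> m \<Longrightarrow> m < n \<Longrightarrow> a (m + 1) = a m + c + (if m \<in> H then 1 else 0)"
  shows "(\<Sum>m=1..n. a n - a m) = c * (((n - 1) * n) div 2) + \<Sum>(H \<inter> {0..n - 1})"
proof -
  have "(\<Sum>m=1..n. a n - a m) = (\<Sum>m=1..n-1. c * m + (if m \<in> H then m else 0))"
    unfolding sum_diff_last_by_parts[OF assms(1)] using assms(2) by (intro sum.cong) (auto simp: algebra_simps)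
  also have "\<dots> = c * \<Sum>{1..n - 1} + \<Sum>({1..n - 1} \<inter> H)"
    by (simp add: sum.distrib sum_distrib_left sum.inter_restrict)
  also have "\<Sum>({1..n - 1} \<inter> H) = \<Sum>(H \<inter> {0..n - 1})"
    by (rule sum.mono_neutral_left) auto
  finally show ?thesis
    using sum_Icc_one_int[OF assms(1)] by simp
qed

lemma Sminus_eq_sum_carry_set:
  fixes s t q N :: int
  assumes "0 \<le> s" "s < q" "0 < t" "0 \<le> N"
  defines "M \<equiv> - ((s - N*t) div q)"
  shows "Sminus s t q N = - (q div t) * (((M - 1) * M) div 2) - M * (N - (s + (M - 1)*q) div t)
    - \<Sum>(carry_set s (q mod t) t \<inter> {0..M - 1})"
proof -
  define a where "a m = (s + (m - 1)*q) div t" for m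
  have "0 \<le> N*t"
    using assms(3,4) by simp
  then have "0 \<le> M"
    unfolding M_def using assms(1,2) zdiv_less_iff[of q "s - N*t" 1] by simp
  have "Sminus s t q N = - (\<Sum>m=1..M. N - a m)"
    unfolding a_def M_def by (rule Sminus_dual_sum[OF assms(1-4)])
  also have "\<dots> = - (\<Sum>m=1..M. (a M - a m) + (N - a M))"
    by simp
  also have "\<dots> = - (\<Sum>m=1..M. a M - a m) - M * (N - a M)"
    unfolding sum.distrib sum_constant using \<open>0 \<le> M\<close> by simp
  also have "(\<Sum>m=1..M. a M - a m)
      = q div t * (((M - 1) * M) div 2) + \<Sum>(carry_set s (q mod t) t \<inter> {0..M - 1})"
    by (rule sum_diff_last_increments[OF \<open>0 \<le> M\<close>])
      (use div_step_carry[OF \<open>0 < t\<close>] in \<open>simp add: a_def\<close>)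
  finally show ?thesis
    unfolding a_def by simp
qed

lemma carry_set_cancel_common_factor:
  fixes g r e d n :: int
  assumes "0 < g" "0 \<le> e" "e < g" "0 \<le> n"
  shows "carry_set (g*r + e) (g*d) (g*n) = carry_set r d n"
proof -
  have mod_eq: "(g*r + e + k*(g*d)) mod (g*n) = g * ((r + k*d) mod n) + e" for k
  proof -
    have "(g*(r + k*d) + e) div g = r + k*d" "(g*(r + k*d) + e) mod g = e"
      using assms(1-3) by simp_all
    then show ?thesis
      using zmod_zmult2_eq[OF assms(4), of "g*(r + k*d) + e" g] by (simp add: algebra_simps)
  qed
  have less_iff: "g*x + e < g*d \<longleftrightarrow> x < d" for x
  proof
    assume "g*x + e < g*d"
    then have "g*x < g*d" using assms(2) by simp
    then show "x < d" using assms(1) by simp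
  next
    assume "x < d"
    then have "g*(x + 1) \<le> g*d" using assms(1) by simp
    then show "g*x + e < g*d" using assms(3) by (simp add: algebra_simps)
  qed
  show ?thesis
    unfolding carry_set_def mod_eq less_iff ..
qed

lemma carry_set_mod_left: "carry_set (r mod n) d n = carry_set r d n"
  unfolding carry_set_def by (simp add: mod_add_left_eq)

lemma carry_set_reduce:
  fixes s q t g :: int
  assumes "0 < g" "g dvd t" "g dvd q" "0 < t"
  shows "carry_set s (q mod t) t
    = carry_set ((s div g) mod (t div g)) ((q div g) mod (t div g)) (t div g)"
proof -
  obtain tt qt where t: "t = g*tt" and q: "q = g*qt"
    using assms(2,3) unfolding dvd_def by blast
  have "0 \<le> tt"
    using assms(1,4) t by (simp add: zero_less_mult_iff)
  have "carry_set s (q mod t) t = carry_set (g*(s div g) + s mod g) (g*(qt mod tt)) (g*tt)"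
    unfolding t q by (simp add: mod_mult_mult1)
  also have "\<dots> = carry_set (s div g) (qt mod tt) tt"
    using assms(1) \<open>0 \<le> tt\<close> by (intro carry_set_cancel_common_factor) simp_all
  finally show ?thesis
    using assms(1) unfolding t q carry_set_mod_left by simp
qed

lemma cancel_gcd_residue:
  fixes t q :: int
  assumes "0 < t" "\<not> t dvd q"
  defines "n \<equiv> t div gcd t q" and "r \<equiv> (q div gcd t q) mod (t div gcd t q)"
  shows "0 < n" "0 < r" "r < n" "coprime n r"
proof -
  define g where "g = gcd t q"
  have "0 < g"
    using assms(1) unfolding g_def by simp
  have t: "t = g * n" and q: "q = g * (q div g)"
    unfolding n_def g_def by simp_all
  show "0 < n"
    using assms(1) \<open>0 < g\<close> unfolding t by (simp add: zero_less_mult_iff)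
  then show "coprime n r"
    using div_gcd_coprime[of t q] assms(1) unfolding r_def n_def by simp
  have "r \<noteq> 0"
  proof
    assume "r = 0"
    then have "g * n dvd g * (q div g)"
      unfolding r_def n_def g_def by (simp add: mod_eq_0_iff_dvd)
    then show False
      using assms(2) t q by simp
  qed
  then show "0 < r" "r < n"
    using \<open>0 < n\<close> unfolding r_def n_def by (simp_all add: order_le_neq_trans)
qed

lemma carry_set_shift:
  fixes r d n k j :: int
  assumes "0 < n" "0 \<le> k" "0 \<le> j"
  shows "k + j*n \<in> carry_set r d n \<longleftrightarrow> k \<in> carry_set r d n"
proof -
  have "(r + (k + j*n)*d) mod n = (r + k*d + (j*d)*n) mod n"
    by (simp add: algebra_simps)
  then have "(r + (k + j*n)*d) mod n = (r + k*d) mod n"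
    by simp
  then show ?thesis
    using assms unfolding carry_set_def by simp
qed

lemma card_carry_set_period:
  fixes r d n :: int
  assumes "0 < n" "coprime n d" "0 \<le> d" "d \<le> n"
  shows "card (carry_set r d n \<inter> {0..n - 1}) = nat d"
proof -
  define A where "A = {0..n - 1}"
  define \<phi> where "\<phi> k = (r + k*d) mod n" for k
  have inj: "inj_on \<phi> A"
  proof
    fix x y assume "x \<in> A" "y \<in> A" "\<phi> x = \<phi> y"
    then have "n dvd (x - y) * d"
      unfolding \<phi>_def by (simp add: mod_eq_dvd_iff algebra_simps)
    then have "n dvd x - y"
      using assms(2) by (simp add: coprime_dvd_mult_left_iff)
    show "x = y"
    proof (rule ccontr)
      assume "x \<noteq> y"
      then have "\<bar>n\<bar> \<le> \<bar>x - y\<bar>"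
        using dvd_imp_le_int \<open>n dvd x - y\<close> by simp
      then show False
        using \<open>x \<in> A\<close> \<open>y \<in> A\<close> unfolding A_def by auto
    qed
  qed
  have "\<phi> ` A = A"
    using inj assms(1) by (intro endo_inj_surj) (auto simp: A_def \<phi>_def)
  then have "\<phi> ` {k\<in>A. \<phi> k < d} = {y\<in>A. y < d}"
    by auto
  also have "\<dots> = {0..d - 1}"
    using assms(4) unfolding A_def by auto
  finally have image: "\<phi> ` {k\<in>A. \<phi> k < d} = {0..d - 1}" .
  have "carry_set r d n \<inter> A = {k\<in>A. \<phi> k < d}"
    unfolding carry_set_def A_def \<phi>_def by auto
  moreover have "card {k\<in>A. \<phi> k < d} = card (\<phi> ` {k\<in>A. \<phi> k < d})"
    using inj by (simp add: card_image inj_on_subset)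
  ultimately show ?thesis
    unfolding A_def[symmetric] image by simp
qed

lemma carry_set_block:
  fixes r d n j :: int
  assumes "0 < n" "0 \<le> j"
  shows "carry_set r d n \<inter> {j*n..j*n + n - 1} = (+) (j*n) ` (carry_set r d n \<inter> {0..n - 1})"
proof
  show "carry_set r d n \<inter> {j*n..j*n + n - 1} \<subseteq> (+) (j*n) ` (carry_set r d n \<inter> {0..n - 1})"
  proof
    fix k assume k: "k \<in> carry_set r d n \<inter> {j*n..j*n + n - 1}"
    then have "k - j*n \<in> carry_set r d n"
      using carry_set_shift[OF assms(1), of "k - j*n" j] assms(2) by simp
    with k have "k - j*n \<in> carry_set r d n \<inter> {0..n - 1}"
      by simp
    then show "k \<in> (+) (j*n) ` (carry_set r d n \<inter> {0..n - 1})"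
      by (rule rev_image_eqI) simp
  qed
  show "(+) (j*n) ` (carry_set r d n \<inter> {0..n - 1}) \<subseteq> carry_set r d n \<inter> {j*n..j*n + n - 1}"
    using carry_set_shift[OF assms(1) _ assms(2)] by (auto simp: carry_set_def add.commute)
qed

lemma sum_carry_set_blocks:
  fixes r d n u :: int
  defines "J \<equiv> carry_set r d n \<inter> {0..n - 1}"
  assumes "0 < n" "0 \<le> u"
  shows "\<Sum>(carry_set r d n \<inter> {0..u*n - 1}) = u * \<Sum>J + int (card J) * n * (((u - 1) * u) div 2)"
  using assms(3)
proof (induction u rule: int_ge_induct)
  case base
  show ?case by simp
next
  case (step u)
  have "0 \<le> u*n"
    using step.hyps assms(2) by simp
  then have split: "{0..(u + 1)*n - 1} = {0..u*n - 1} \<union> {u*n..u*n + n - 1}"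
    using assms(2) by (auto simp: algebra_simps)
  have "\<Sum>(carry_set r d n \<inter> {0..(u + 1)*n - 1})
      = \<Sum>(carry_set r d n \<inter> {0..u*n - 1}) + \<Sum>(carry_set r d n \<inter> {u*n..u*n + n - 1})"
    unfolding split Int_Un_distrib by (rule sum.union_disjoint) auto
  also have "\<Sum>(carry_set r d n \<inter> {u*n..u*n + n - 1}) = \<Sum>J + int (card J) * (u*n)"
    unfolding carry_set_block[OF assms(2) step.hyps] J_def[symmetric]
    by (simp add: sum.reindex sum.distrib add.commute)
  finally have "\<Sum>(carry_set r d n \<inter> {0..(u + 1)*n - 1})
      = (u + 1) * \<Sum>J + int (card J) * n * (((u - 1) * u) div 2 + u)"
    using step.IH by (simp add: algebra_simps)
  moreover have "((u + 1 - 1) * (u + 1)) div 2 = ((u - 1) * u) div 2 + u"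
  proof -
    have "(u + 1 - 1) * (u + 1) = (u - 1) * u + 2 * u"
      by (simp add: algebra_simps)
    then show ?thesis by simp
  qed
  ultimately show ?case
    by simp
qed

lemma carry_set_upto_empty:
  fixes r d n M :: int
  defines "J \<equiv> carry_set r d n \<inter> {0..n - 1}"
  assumes "J \<noteq> {}" "M \<le> Min J"
  shows "carry_set r d n \<inter> {0..M - 1} = {}"
proof -
  have "Min J \<le> n - 1"
    using Min_in[of J] assms(2) unfolding J_def by auto
  then have "carry_set r d n \<inter> {0..M - 1} \<subseteq> J"
    using assms(3) unfolding J_def by auto
  then show ?thesis
    using Min_le[of J] assms(3) unfolding J_def by fastforce
qed

lemma carry_set_upto_eq_period:
  fixes r d n M :: int
  defines "J \<equiv> carry_set r d n \<inter> {0..n - 1}"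
  assumes "0 < n" "J \<noteq> {}" "Max J < M" "M \<le> Min J + n"
  shows "carry_set r d n \<inter> {0..M - 1} = J"
proof
  have "finite J"
    unfolding J_def by simp
  show "J \<subseteq> carry_set r d n \<inter> {0..M - 1}"
  proof
    fix k assume "k \<in> J"
    then have "k < M"
      using Max_ge[OF \<open>finite J\<close>] assms(4) by fastforce
    with \<open>k \<in> J\<close> show "k \<in> carry_set r d n \<inter> {0..M - 1}"
      unfolding J_def by auto
  qed
  show "carry_set r d n \<inter> {0..M - 1} \<subseteq> J"
  proof
    fix k assume k: "k \<in> carry_set r d n \<inter> {0..M - 1}"
    show "k \<in> J"
    proof (rule ccontr)
      assume "k \<notin> J"
      with k have "n \<le> k"
        unfolding J_def by auto
      with k have "k - n \<in> carry_set r d n"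
        using carry_set_shift[OF assms(2), of "k - n" 1] by simp
      moreover have "Min J \<le> n - 1"
        using Min_in[OF \<open>finite J\<close> assms(3)] unfolding J_def by auto
      moreover have "k - n < Min J"
        using k assms(5) by auto
      ultimately have "k - n \<in> J"
        using \<open>n \<le> k\<close> unfolding J_def by auto
      then show False
        using Min_le[OF \<open>finite J\<close>] \<open>k - n < Min J\<close> by fastforce
    qed
  qed
qed

lemma sum_carry_set_upto:
  fixes r d n M :: int
  defines "J \<equiv> carry_set r d n \<inter> {0..n - 1}" and "u \<equiv> (M - 1) div n"
  assumes "0 < n" "1 \<le> M"
  shows "\<Sum>(carry_set r d n \<inter> {0..M - 1})
    = u * \<Sum>J + int (card J) * n * (((u - 1) * u) div 2) + \<Sum>(carry_set r d n \<inter> {u*n..M - 1})"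
proof -
  have "0 \<le> u"
    unfolding u_def using assms(3,4) by (simp add: pos_imp_zdiv_nonneg_iff)
  moreover have "u*n \<le> M - 1"
    using div_mult_mod_eq[of "M - 1" n] pos_mod_sign[OF assms(3), of "M - 1"]
    unfolding u_def by linarith
  moreover have "0 \<le> u*n"
    using \<open>0 \<le> u\<close> assms(3) by simp
  ultimately have split: "{0..M - 1} = {0..u*n - 1} \<union> {u*n..M - 1}"
    by auto
  have "\<Sum>(carry_set r d n \<inter> {0..M - 1})
      = \<Sum>(carry_set r d n \<inter> {0..u*n - 1}) + \<Sum>(carry_set r d n \<inter> {u*n..M - 1})"
    unfolding split Int_Un_distrib by (rule sum.union_disjoint) auto
  then show ?thesis
    unfolding sum_carry_set_blocks[OF assms(3) \<open>0 \<le> u\<close>] J_def .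
qed

theorem theorem13:
  fixes s t q N :: int
  assumes "0 \<le> s" "s < q" "1 \<le> t" "t < q" "0 \<le> N"
    and "\<not> t dvd q" and "gcd t q > 1"
  defines "g \<equiv> gcd t q"
  defines "tt \<equiv> t div g"
  defines "qt \<equiv> q div g"
  defines "sbar \<equiv> s div g"
  defines "shh \<equiv> sbar mod tt"
  defines "qhh \<equiv> qt mod tt"
  defines "M \<equiv> - ((s - N*t) div q)"
  defines "S \<equiv> - (q div t) * (((M - 1) * M) div 2) - M * (N - (s + (M - 1)*q) div t)"
  defines "H \<equiv> {k::int. 0 \<le> k \<and> (shh + k*qhh) mod tt < qhh}"
  defines "J \<equiv> H \<inter> {0..tt - 1}"
  defines "u \<equiv> (M - 1) div tt"
  shows "(Min J \<ge> M \<longrightarrow> Sminus s t q N = S)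
    \<and> (Min J < M \<and> M \<le> Max J \<longrightarrow> Sminus s t q N = S - \<Sum>(H \<inter> {0..M-1}))
    \<and> (Max J < M \<and> Min J + tt \<ge> M \<longrightarrow> Sminus s t q N = S - \<Sum>J)
    \<and> (Max J < M \<and> Min J + tt < M \<longrightarrow>
         Sminus s t q N = S - u * \<Sum>J - qhh * tt * (((u - 1) * u) div 2)
                          - \<Sum>(H \<inter> {u*tt..M-1}))"
proof -
  have "0 < t"
    using assms(3) by simp
  have "0 < tt" "0 < qhh" "qhh < tt" "coprime tt qhh"
    using cancel_gcd_residue[OF \<open>0 < t\<close> assms(6)] unfolding tt_def qhh_def qt_def g_def
    by simp_all
  have H: "H = carry_set shh qhh tt"
    unfolding H_def carry_set_def ..
  also have "\<dots> = carry_set s (q mod t) t"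
    unfolding shh_def sbar_def qhh_def qt_def tt_def g_def
    by (rule carry_set_reduce[symmetric]) (use \<open>0 < t\<close> in simp_all)
  finally have "H = carry_set s (q mod t) t" .
  then have core: "Sminus s t q N = S - \<Sum>(H \<inter> {0..M - 1})"
    unfolding S_def M_def by (simp only: Sminus_eq_sum_carry_set[OF assms(1,2) \<open>0 < t\<close> assms(5)])
  have "int (card J) = qhh"
    using card_carry_set_period[OF \<open>0 < tt\<close> \<open>coprime tt qhh\<close>] \<open>0 < qhh\<close> \<open>qhh < tt\<close>
    unfolding J_def H by simp
  then have "J \<noteq> {}"
    using \<open>0 < qhh\<close> by auto
  show ?thesis
  proof (intro conjI impI)
    assume "M \<le> Min J"
    then show "Sminus s t q N = S"
      using core carry_set_upto_empty[of shh qhh tt M] \<open>J \<noteq> {}\<close> unfolding J_def H by simp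
  next
    show "Sminus s t q N = S - \<Sum>(H \<inter> {0..M-1})"
      by (rule core)
  next
    assume "Max J < M \<and> M \<le> Min J + tt"
    then show "Sminus s t q N = S - \<Sum>J"
      using core carry_set_upto_eq_period[OF \<open>0 < tt\<close>, of shh qhh M] \<open>J \<noteq> {}\<close>
      unfolding J_def H by simp
  next
    assume "Max J < M \<and> Min J + tt < M"
    moreover have "0 \<le> Min J"
      using Min_in[of J] \<open>J \<noteq> {}\<close> unfolding J_def by auto
    ultimately have "1 \<le> M"
      using \<open>0 < tt\<close> by simp
    then show "Sminus s t q N = S - u * \<Sum>J - qhh * tt * (((u - 1) * u) div 2) - \<Sum>(H \<inter> {u*tt..M-1})"
      using core sum_carry_set_upto[OF \<open>0 < tt\<close> \<open>1 \<le> M\<close>, of shh qhh] \<open>int (card J) = qhh\<close>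
      unfolding u_def J_def H by (simp add: algebra_simps)
  qed
qed

end
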